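(* Let $\psi=(x,y,z):\Sigma\to\mathbb{R}^3$ be a $[\varphi,\vec e_3]$-minimal immersion and $\xi=u+iv$ a conformal parameter of $\Sigma$. Then the system $$x^*_\xi=-ie^{\varphi(z)}y_\xi,\qquad y^*_\xi=ie^{\varphi(z)}x_\xi,\qquad z^*_\xi=e^{\varphi(z)}z_\xi$$ for real functions $x^*,y^*,z^*$ is integrable: for each right-hand side $F\in\{-ie^{\varphi(z)}y_\xi,\ ie^{\varphi(z)}x_\xi,\ e^{\varphi(z)}z_\xi\}$ one has $\partial_{\bar\xi}F=\partial_\xi\overline{F}$ (i.e. the would-be mixed derivatives $x^*_{\xi\bar\xi}=x^*_{\bar\xi\xi}$, etc., agree).
   Context: $\varphi$ is a smooth function on an open interval $I$, $\vec e_3=(0,0,1)$. An immersion $\psi=(x,y,z):\Sigma\to\mathbb{R}^3$ with $z(\Sigma)\subseteq I$ is $[\varphi,\vec e_3]$-minimal if, regarding $\Sigma$ as a Riemann surface with the conformal structure of its induced metric, for every conformal parameter $\xi$: $2x_{\xi\bar\xi}+\dot\varphi(z)(z_\xi x_{\bar\xi}+z_{\bar\xi}x_\xi)=0$, $2y_{\xi\bar\xi}+\dot\varphi(z)(z_\xi y_{\bar\xi}+z_{\bar\xi}y_\xi)=0$, $2z_{\xi\bar\xi}-\dot\varphi(z)(|x_\xi|^2+|y_\xi|^2-|z_\xi|^2)=0$ (equivalently, its mean curvature vector is $\dot\varphi(z)\vec e_3^\perp$). *)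

theory Defs
  imports "HOL-Analysis.Analysis"
begin

text \<open>Local setting: a conformal parameter \<xi> = u + i v of \<Sigma> is a chart onto an open
  set U of the complex plane; the immersion is given in this chart by real functions x y z.\<close>

definition pu :: "(complex \<Rightarrow> 'a::real_normed_vector) \<Rightarrow> complex \<Rightarrow> 'a" where
  "pu f p = frechet_derivative f (at p) 1"

definition pv :: "(complex \<Rightarrow> 'a::real_normed_vector) \<Rightarrow> complex \<Rightarrow> 'a" where
  "pv f p = frechet_derivative f (at p) \<i>"

definition dxi :: "(complex \<Rightarrow> complex) \<Rightarrow> complex \<Rightarrow> complex" where
  "dxi f p = (pu f p - \<i> * pv f p) / 2"

definition dxib :: "(complex \<Rightarrow> complex) \<Rightarrow> complex \<Rightarrow> complex" where
  "dxib f p = (pu f p + \<i> * pv f p) / 2"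

fun Ck_on :: "nat \<Rightarrow> complex set \<Rightarrow> (complex \<Rightarrow> real) \<Rightarrow> bool" where
  "Ck_on 0 U f = continuous_on U f"
| "Ck_on (Suc k) U f = (f differentiable_on U \<and> Ck_on k U (pu f) \<and> Ck_on k U (pv f))"

definition smooth2_on :: "complex set \<Rightarrow> (complex \<Rightarrow> real) \<Rightarrow> bool" where
  "smooth2_on U f = (\<forall>k. Ck_on k U f)"

definition smooth1_on :: "real set \<Rightarrow> (real \<Rightarrow> real) \<Rightarrow> bool" where
  "smooth1_on I \<phi> = (\<forall>k. ((deriv ^^ k) \<phi>) differentiable_on I)"

definition cx :: "(complex \<Rightarrow> real) \<Rightarrow> complex \<Rightarrow> complex" where
  "cx f = (\<lambda>q. complex_of_real (f q))"

definition conformal_immersion ::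
  "complex set \<Rightarrow> (complex \<Rightarrow> real) \<Rightarrow> (complex \<Rightarrow> real) \<Rightarrow> (complex \<Rightarrow> real) \<Rightarrow> bool" where
  "conformal_immersion U x y z =
     (open U \<and> smooth2_on U x \<and> smooth2_on U y \<and> smooth2_on U z \<and>
      (\<forall>p\<in>U.
         (pu x p)\<^sup>2 + (pu y p)\<^sup>2 + (pu z p)\<^sup>2 = (pv x p)\<^sup>2 + (pv y p)\<^sup>2 + (pv z p)\<^sup>2 \<and>
         pu x p * pv x p + pu y p * pv y p + pu z p * pv z p = 0 \<and>
         (pu x p)\<^sup>2 + (pu y p)\<^sup>2 + (pu z p)\<^sup>2 > 0))"

definition phi_minimal ::
  "(real \<Rightarrow> real) \<Rightarrow> real set \<Rightarrow> complex set \<Rightarrow>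
   (complex \<Rightarrow> real) \<Rightarrow> (complex \<Rightarrow> real) \<Rightarrow> (complex \<Rightarrow> real) \<Rightarrow> bool" where
  "phi_minimal \<phi> I U x y z =
     (conformal_immersion U x y z \<and> z ` U \<subseteq> I \<and>
      (\<forall>p\<in>U.
        2 * dxib (dxi (cx x)) p + complex_of_real (deriv \<phi> (z p)) *
            (dxi (cx z) p * dxib (cx x) p + dxib (cx z) p * dxi (cx x) p) = 0 \<and>
        2 * dxib (dxi (cx y)) p + complex_of_real (deriv \<phi> (z p)) *
            (dxi (cx z) p * dxib (cx y) p + dxib (cx z) p * dxi (cx y) p) = 0 \<and>
        2 * dxib (dxi (cx z)) p - complex_of_real (deriv \<phi> (z p)) *
            complex_of_real ((cmod (dxi (cx x) p))\<^sup>2 + (cmod (dxi (cx y) p))\<^sup>2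
                             - (cmod (dxi (cx z) p))\<^sup>2) = 0))"

end

theory Submission
  imports Defs
begin

text \<open>Since dxi (cnj \<circ> F) = cnj (dxib F), each integrability condition says that dxib F is
  real. For F = c e^{\<phi>(z)} w_\<xi> with w real, the product and chain rules give
  dxib F = c e^{\<phi>(z)} (w_{\<xi>\<xi>bar} + \<phi>'(z) z_{\<xi>bar} w_\<xi>), and w_{\<xi>\<xi>bar} = \<Delta>w/4 is real
  by the symmetry of second derivatives. For w = z and c = 1 the remaining term
  \<phi>'(z) |z_\<xi>|^2 is real. For w = x, y and c = \<plusminus>i the real part of the bracket is half the
  left-hand side of the corresponding minimality equation, so it vanishes.\<close>

definition dir_deriv :: "('a::real_normed_vector \<Rightarrow> 'b::real_normed_vector) \<Rightarrow> 'a \<Rightarrow> 'a \<Rightarrow> 'b" where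
  "dir_deriv f v q = frechet_derivative f (at q) v"

lemma pu_eq_dir_deriv: "pu f = dir_deriv f 1"
  and pv_eq_dir_deriv: "pv f = dir_deriv f \<i>"
  by (simp_all add: fun_eq_iff pu_def pv_def dir_deriv_def)

lemma has_real_derivative_along_line:
  fixes f :: "'a::real_normed_vector \<Rightarrow> real"
  assumes "f differentiable (at (a + t *\<^sub>R v))"
  shows "((\<lambda>s. f (a + s *\<^sub>R v)) has_real_derivative dir_deriv f v (a + t *\<^sub>R v)) (at t)"
proof -
  let ?D = "frechet_derivative f (at (a + t *\<^sub>R v))"
  have "((\<lambda>s. a + s *\<^sub>R v) has_derivative (\<lambda>s. s *\<^sub>R v)) (at t)"
    by (auto intro!: derivative_eq_intros)
  from diff_chain_at[OF this frechet_derivative_works[THEN iffD1, OF assms]]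
  have "((\<lambda>s. f (a + s *\<^sub>R v)) has_derivative (\<lambda>s. ?D (s *\<^sub>R v))) (at t)"
    by (simp add: o_def)
  moreover have "?D (s *\<^sub>R v) = ?D v * s" for s
    using linear_scale[OF linear_frechet_derivative[OF assms]] by (simp add: mult.commute)
  ultimately show ?thesis
    by (simp add: has_field_derivative_def dir_deriv_def)
qed

lemma second_difference_mean_value:
  fixes f :: "'a::real_normed_vector \<Rightarrow> real"
  assumes "0 < h" "open U"
    and rectangle: "\<And>s t. s \<in> {0..h} \<Longrightarrow> t \<in> {0..h} \<Longrightarrow> p + s *\<^sub>R a + t *\<^sub>R b \<in> U"
    and "f differentiable_on U" "dir_deriv f a differentiable_on U"
  obtains s t where "s \<in> {0<..<h}" "t \<in> {0<..<h}"
    "f (p + h *\<^sub>R a + h *\<^sub>R b) - f (p + h *\<^sub>R a) - f (p + h *\<^sub>R b) + f p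
       = h\<^sup>2 * dir_deriv (dir_deriv f a) b (p + s *\<^sub>R a + t *\<^sub>R b)"
proof -
  define P where "P s t = p + s *\<^sub>R a + t *\<^sub>R b" for s t
  have diff: "g differentiable (at (P s t))"
    if "g differentiable_on U" "s \<in> {0..h}" "t \<in> {0..h}" for g :: "'a \<Rightarrow> real" and s t
    using that rectangle differentiable_on_eq_differentiable_at[OF \<open>open U\<close>]
    unfolding P_def by blast
  have along_a: "((\<lambda>s. g (P s t)) has_real_derivative dir_deriv g a (P s t)) (at s)"
    if "g differentiable_on U" "s \<in> {0..h}" "t \<in> {0..h}" for g :: "'a \<Rightarrow> real" and s t
    using has_real_derivative_along_line[of g "p + t *\<^sub>R b" s a] diff[OF that]
    by (simp add: P_def add_ac)
  have along_b: "((\<lambda>t. g (P s t)) has_real_derivative dir_deriv g b (P s t)) (at t)"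
    if "g differentiable_on U" "s \<in> {0..h}" "t \<in> {0..h}" for g :: "'a \<Rightarrow> real" and s t
    using has_real_derivative_along_line[of g "p + s *\<^sub>R a" t b] diff[OF that]
    by (simp add: P_def add_ac)
  have diff_a: "((\<lambda>s. f (P s h) - f (P s 0)) has_real_derivative
          dir_deriv f a (P s h) - dir_deriv f a (P s 0)) (at s)" if "0 \<le> s" "s \<le> h" for s
    using along_a[OF \<open>f differentiable_on U\<close>] that \<open>0 < h\<close>
    by (auto intro!: derivative_intros)
  obtain s where s: "0 < s" "s < h"
    "(f (P h h) - f (P h 0)) - (f (P 0 h) - f (P 0 0))
       = (h - 0) * (dir_deriv f a (P s h) - dir_deriv f a (P s 0))"
    using MVT2[OF \<open>0 < h\<close> diff_a] by auto
  obtain t where t: "0 < t" "t < h"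
    "dir_deriv f a (P s h) - dir_deriv f a (P s 0) = (h - 0) * dir_deriv (dir_deriv f a) b (P s t)"
    using MVT2[of 0 h "\<lambda>t. dir_deriv f a (P s t)" "\<lambda>t. dir_deriv (dir_deriv f a) b (P s t)"]
      along_b[OF \<open>dir_deriv f a differentiable_on U\<close>] \<open>0 < h\<close> s by auto
  show thesis
    by (rule that[of s t]) (use s t in \<open>auto simp: P_def power2_eq_square algebra_simps\<close>)
qed

lemma mixed_dir_derivs_agree_nearby:
  fixes f :: "'a::real_normed_vector \<Rightarrow> real"
  assumes "0 < d" "ball p d \<subseteq> U" "open U" "f differentiable_on U"
    and "dir_deriv f a differentiable_on U" "dir_deriv f b differentiable_on U"
  obtains q1 q2 where "q1 \<in> ball p d" "q2 \<in> ball p d"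
    "dir_deriv (dir_deriv f a) b q1 = dir_deriv (dir_deriv f b) a q2"
proof -
  define h where "h = d / (norm a + norm b + 1)"
  have "h > 0"
    using \<open>d > 0\<close> by (simp add: h_def add_nonneg_pos)
  have near: "p + s *\<^sub>R a + t *\<^sub>R b \<in> ball p d" if "s \<in> {0..h}" "t \<in> {0..h}" for s t
  proof -
    have "dist (p + s *\<^sub>R a + t *\<^sub>R b) p \<le> s * norm a + t * norm b"
      using that norm_triangle_ineq[of "s *\<^sub>R a" "t *\<^sub>R b"] by (simp add: dist_norm add.assoc)
    also have "\<dots> \<le> h * (norm a + norm b)"
      using that by (simp add: distrib_left add_mono mult_right_mono)
    also have "\<dots> < d"
      using \<open>d > 0\<close> by (simp add: h_def pos_divide_less_eq add_nonneg_pos)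
    finally show ?thesis by (simp add: dist_commute)
  qed
  have near': "p + s *\<^sub>R b + t *\<^sub>R a \<in> ball p d" if "s \<in> {0..h}" "t \<in> {0..h}" for s t
    using near[OF that(2,1)] by (simp add: add_ac)
  obtain s1 t1 where st1: "s1 \<in> {0<..<h}" "t1 \<in> {0<..<h}"
    "f (p + h *\<^sub>R a + h *\<^sub>R b) - f (p + h *\<^sub>R a) - f (p + h *\<^sub>R b) + f p
       = h\<^sup>2 * dir_deriv (dir_deriv f a) b (p + s1 *\<^sub>R a + t1 *\<^sub>R b)"
    using second_difference_mean_value[OF \<open>h > 0\<close> \<open>open U\<close>] near assms(2,4,5) by blast
  obtain s2 t2 where st2: "s2 \<in> {0<..<h}" "t2 \<in> {0<..<h}"
    "f (p + h *\<^sub>R b + h *\<^sub>R a) - f (p + h *\<^sub>R b) - f (p + h *\<^sub>R a) + f p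
       = h\<^sup>2 * dir_deriv (dir_deriv f b) a (p + s2 *\<^sub>R b + t2 *\<^sub>R a)"
    using second_difference_mean_value[OF \<open>h > 0\<close> \<open>open U\<close>] near' assms(2,4,6) by blast
  have "h\<^sup>2 * dir_deriv (dir_deriv f a) b (p + s1 *\<^sub>R a + t1 *\<^sub>R b)
      = h\<^sup>2 * dir_deriv (dir_deriv f b) a (p + s2 *\<^sub>R b + t2 *\<^sub>R a)"
    using st1(3) st2(3) by (simp add: algebra_simps)
  then show thesis
    using that near[of s1 t1] near'[of s2 t2] st1 st2 \<open>h > 0\<close> by simp
qed

lemma dir_deriv_commute:
  fixes f :: "'a::real_normed_vector \<Rightarrow> real"
  assumes "open U" "p \<in> U" "f differentiable_on U"
    and "dir_deriv f a differentiable_on U" "dir_deriv f b differentiable_on U"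
    and cont_ab: "isCont (dir_deriv (dir_deriv f a) b) p"
    and cont_ba: "isCont (dir_deriv (dir_deriv f b) a) p"
  shows "dir_deriv (dir_deriv f a) b p = dir_deriv (dir_deriv f b) a p"
proof -
  let ?A = "dir_deriv (dir_deriv f a) b p" and ?B = "dir_deriv (dir_deriv f b) a p"
  have "dist ?A ?B < 2 * e" if "e > 0" for e
  proof -
    obtain d1 where "d1 > 0" and d1: "\<And>q. dist q p < d1 \<Longrightarrow> dist (dir_deriv (dir_deriv f a) b q) ?A < e"
      using cont_ab \<open>e > 0\<close> unfolding continuous_at_eps_delta by blast
    obtain d2 where "d2 > 0" and d2: "\<And>q. dist q p < d2 \<Longrightarrow> dist (dir_deriv (dir_deriv f b) a q) ?B < e"
      using cont_ba \<open>e > 0\<close> unfolding continuous_at_eps_delta by blast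
    obtain r where "r > 0" "ball p r \<subseteq> U"
      using \<open>open U\<close> \<open>p \<in> U\<close> openE by blast
    define d where "d = min r (min d1 d2)"
    have "d > 0" "ball p d \<subseteq> U"
      using \<open>r > 0\<close> \<open>d1 > 0\<close> \<open>d2 > 0\<close> \<open>ball p r \<subseteq> U\<close> by (auto simp: d_def)
    then obtain q1 q2 where "q1 \<in> ball p d" "q2 \<in> ball p d"
      and same: "dir_deriv (dir_deriv f a) b q1 = dir_deriv (dir_deriv f b) a q2"
      using mixed_dir_derivs_agree_nearby assms(1,3-5) by metis
    then have "dist (dir_deriv (dir_deriv f a) b q1) ?A < e"
      and "dist (dir_deriv (dir_deriv f a) b q1) ?B < e"
      using d1[of q1] d2[of q2] unfolding same by (auto simp: d_def dist_commute)
    then show ?thesis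
      using dist_triangle3[of ?A ?B "dir_deriv (dir_deriv f a) b q1"] by linarith
  qed
  from this[of "dist ?A ?B / 2"] show ?thesis
    by (cases "?A = ?B") auto
qed

lemma pv_pu_eq_pu_pv:
  assumes "open U" "p \<in> U" "Ck_on 2 U w"
  shows "pv (pu w) p = pu (pv w) p"
  using assms dir_deriv_commute[of U p w 1 \<i>]
  by (simp add: numeral_2_eq_2 pu_eq_dir_deriv pv_eq_dir_deriv continuous_on_eq_continuous_at)

lemma Ck_on_2_differentiable_at:
  assumes "open U" "p \<in> U" "Ck_on 2 U w"
  shows "w differentiable (at p)"
  using assms differentiable_on_eq_differentiable_at by (auto simp: numeral_2_eq_2)

lemma
  assumes "(f has_derivative D) (at p)"
  shows dxi_has_derivative: "dxi f p = (D 1 - \<i> * D \<i>) / 2"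
    and dxib_has_derivative: "dxib f p = (D 1 + \<i> * D \<i>) / 2"
  using frechet_derivative_at[OF assms]
  by (simp_all add: dxi_def dxib_def pu_def pv_def)

lemma dxib_const: "dxib (\<lambda>q. c) p = 0"
  by (simp add: dxib_def pu_def pv_def)

lemma dxib_mult:
  assumes "f differentiable (at p)" "g differentiable (at p)"
  shows "dxib (\<lambda>q. f q * g q) p = f p * dxib g p + dxib f p * g p"
proof -
  let ?Df = "frechet_derivative f (at p)" and ?Dg = "frechet_derivative g (at p)"
  have "((\<lambda>q. f q * g q) has_derivative (\<lambda>h. f p * ?Dg h + ?Df h * g p)) (at p)"
    using has_derivative_mult assms frechet_derivative_works by blast
  then have "dxib (\<lambda>q. f q * g q) p
      = (f p * ?Dg 1 + ?Df 1 * g p + \<i> * (f p * ?Dg \<i> + ?Df \<i> * g p)) / 2"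
    by (rule dxib_has_derivative)
  also have "\<dots> = f p * dxib g p + dxib f p * g p"
    by (simp add: dxib_def pu_def pv_def field_simps)
  finally show ?thesis .
qed

lemma dxi_cnj:
  assumes "f differentiable (at p)"
  shows "dxi (\<lambda>q. cnj (f q)) p = cnj (dxib f p)"
proof -
  have "((\<lambda>q. cnj (f q)) has_derivative (\<lambda>h. cnj (frechet_derivative f (at p) h))) (at p)"
    using has_derivative_cnj assms frechet_derivative_works by blast
  then have "dxi (\<lambda>q. cnj (f q)) p
      = (cnj (frechet_derivative f (at p) 1) - \<i> * cnj (frechet_derivative f (at p) \<i>)) / 2"
    by (rule dxi_has_derivative)
  also have "\<dots> = cnj (dxib f p)"
    by (simp add: dxib_def pu_def pv_def)
  finally show ?thesis .
qed

lemma
  fixes w :: "complex \<Rightarrow> real"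
  assumes "w differentiable (at p)"
  shows dxi_cx: "dxi (cx w) p = (of_real (pu w p) - \<i> * of_real (pv w p)) / 2"
    and dxib_cx: "dxib (cx w) p = cnj (dxi (cx w) p)"
proof -
  have "(cx w has_derivative (\<lambda>h. of_real (frechet_derivative w (at p) h))) (at p)"
    unfolding cx_def using has_derivative_of_real assms frechet_derivative_works by blast
  then show "dxi (cx w) p = (of_real (pu w p) - \<i> * of_real (pv w p)) / 2"
    "dxib (cx w) p = cnj (dxi (cx w) p)"
    by (simp_all add: dxi_has_derivative dxib_has_derivative pu_def pv_def)
qed

lemma
  fixes z :: "complex \<Rightarrow> real"
  assumes "z differentiable (at p)" "(g has_real_derivative g') (at (z p))"
  shows differentiable_cx_comp: "cx (\<lambda>q. g (z q)) differentiable (at p)"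
    and dxib_cx_comp: "dxib (cx (\<lambda>q. g (z q))) p = of_real g' * dxib (cx z) p"
proof -
  have "((\<lambda>q. g (z q)) has_derivative (\<lambda>h. g' * frechet_derivative z (at p) h)) (at p)"
    using diff_chain_at[OF frechet_derivative_works[THEN iffD1, OF assms(1)]
        has_field_derivative_imp_has_derivative[OF assms(2)]]
    by (simp add: o_def)
  then have "(cx (\<lambda>q. g (z q)) has_derivative
      (\<lambda>h. of_real (g' * frechet_derivative z (at p) h))) (at p)"
    unfolding cx_def by (rule has_derivative_of_real)
  then show "cx (\<lambda>q. g (z q)) differentiable (at p)"
    "dxib (cx (\<lambda>q. g (z q))) p = of_real g' * dxib (cx z) p"
    using dxib_cx[OF assms(1)] dxi_cx[OF assms(1)]
    by (auto simp: differentiable_def dxib_has_derivative pu_def pv_def field_simps)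
qed

lemma
  fixes w :: "complex \<Rightarrow> real"
  assumes "open U" "p \<in> U" "Ck_on 2 U w"
  shows differentiable_dxi_cx: "dxi (cx w) differentiable (at p)"
    and dxib_dxi_cx: "dxib (dxi (cx w)) p = of_real ((pu (pu w) p + pv (pv w) p) / 4)"
proof -
  have diff: "g differentiable (at q)" if "g differentiable_on U" "q \<in> U" for g :: "complex \<Rightarrow> real" and q
    using that differentiable_on_eq_differentiable_at[OF \<open>open U\<close>] by blast
  have C2: "w differentiable_on U" "pu w differentiable_on U" "pv w differentiable_on U"
    using assms(3) by (simp_all add: numeral_2_eq_2)
  let ?Du = "frechet_derivative (pu w) (at p)" and ?Dv = "frechet_derivative (pv w) (at p)"
  have "((\<lambda>q. (of_real (pu w q) - \<i> * of_real (pv w q)) / 2) has_derivative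
      (\<lambda>h. (of_real (?Du h) - \<i> * of_real (?Dv h)) / 2)) (at p)"
    using diff[OF C2(2) \<open>p \<in> U\<close>] diff[OF C2(3) \<open>p \<in> U\<close>]
    by (auto intro!: derivative_eq_intros simp: frechet_derivative_works)
  then have D: "(dxi (cx w) has_derivative (\<lambda>h. (of_real (?Du h) - \<i> * of_real (?Dv h)) / 2)) (at p)"
    by (rule has_derivative_transform_within_open[OF _ assms(1,2)])
      (simp add: dxi_cx[OF diff[OF C2(1)]])
  then show "dxi (cx w) differentiable (at p)"
    by (auto simp: differentiable_def)
  have "dxib (dxi (cx w)) p = ((of_real (?Du 1) - \<i> * of_real (?Dv 1)) / 2
      + \<i> * ((of_real (?Du \<i>) - \<i> * of_real (?Dv \<i>)) / 2)) / 2"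
    by (rule dxib_has_derivative[OF D])
  also have "\<dots> = of_real ((pu (pu w) p + pv (pv w) p) / 4)
      + \<i> * of_real ((pv (pu w) p - pu (pv w) p) / 4)"
    by (simp add: pu_def pv_def field_simps)
  finally show "dxib (dxi (cx w)) p = of_real ((pu (pu w) p + pv (pv w) p) / 4)"
    using pv_pu_eq_pu_pv[OF assms] by simp
qed

lemma
  fixes w z :: "complex \<Rightarrow> real"
  assumes "open U" "p \<in> U" "Ck_on 2 U w" "z differentiable (at p)"
    and "(g has_real_derivative g') (at (z p))"
  shows differentiable_weighted_dxi_cx:
      "(\<lambda>q. c * of_real (g (z q)) * dxi (cx w) q) differentiable (at p)"
    and dxib_weighted_dxi_cx:
      "dxib (\<lambda>q. c * of_real (g (z q)) * dxi (cx w) q) p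
         = c * (of_real (g (z p)) * dxib (dxi (cx w)) p + of_real g' * dxib (cx z) p * dxi (cx w) p)"
proof -
  have G: "cx (\<lambda>q. g (z q)) differentiable (at p)"
    using differentiable_cx_comp[OF assms(4,5)] .
  have cG: "(\<lambda>q. c * cx (\<lambda>q. g (z q)) q) differentiable (at p)"
    using G by simp
  note W = differentiable_dxi_cx[OF assms(1-3)]
  show "(\<lambda>q. c * of_real (g (z q)) * dxi (cx w) q) differentiable (at p)"
    using cG W by (simp add: cx_def)
  have "dxib (\<lambda>q. c * cx (\<lambda>q. g (z q)) q) p = c * (of_real g' * dxib (cx z) p)"
    using dxib_mult[OF differentiable_const G] dxib_cx_comp[OF assms(4,5)] by (simp add: dxib_const)
  then show "dxib (\<lambda>q. c * of_real (g (z q)) * dxi (cx w) q) p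
      = c * (of_real (g (z p)) * dxib (dxi (cx w)) p + of_real g' * dxib (cx z) p * dxi (cx w) p)"
    using dxib_mult[OF cG W] by (simp add: cx_def algebra_simps)
qed

lemma dxib_eq_dxi_cnj_iff:
  assumes "f differentiable (at p)"
  shows "dxib f p = dxi (\<lambda>q. cnj (f q)) p \<longleftrightarrow> dxib f p \<in> \<real>"
  using dxi_cnj[OF assms] Reals_cnj_iff by metis

lemma has_real_derivative_exp_comp:
  assumes "\<phi> differentiable (at t)"
  shows "((\<lambda>t. exp (\<phi> t)) has_real_derivative exp (\<phi> t) * deriv \<phi> t) (at t)"
  using assms DERIV_deriv_iff_real_differentiable by (auto intro!: derivative_eq_intros)

lemma dxib_eq_dxi_cnj_horizontal:
  fixes w z :: "complex \<Rightarrow> real"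
  assumes "open U" "p \<in> U" "Ck_on 2 U w" "z differentiable (at p)" "\<phi> differentiable (at (z p))"
    and "Re c = 0"
    and minimal: "2 * dxib (dxi (cx w)) p + of_real (deriv \<phi> (z p)) *
        (dxi (cx z) p * dxib (cx w) p + dxib (cx z) p * dxi (cx w) p) = 0"
  defines "F \<equiv> \<lambda>q. c * complex_of_real (exp (\<phi> (z q))) * dxi (cx w) q"
  shows "dxib F p = dxi (\<lambda>q. cnj (F q)) p"
proof -
  let ?L = "dxib (dxi (cx w)) p" and ?W = "dxi (cx w) p" and ?Z = "dxi (cx z) p"
    and ?t = "deriv \<phi> (z p)" and ?E = "exp (\<phi> (z p))"
  note exp_\<phi> = has_real_derivative_exp_comp[OF assms(5)]
  have "w differentiable (at p)"
    using Ck_on_2_differentiable_at[OF assms(1-3)] .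
  have "dxib F p = c * of_real ?E * (?L + of_real ?t * cnj ?Z * ?W)"
    using dxib_weighted_dxi_cx[OF assms(1-4) exp_\<phi>] dxib_cx[OF assms(4)]
    by (simp add: F_def algebra_simps)
  moreover have "?L \<in> \<real>"
    unfolding dxib_dxi_cx[OF assms(1-3)] by (rule Reals_of_real)
  moreover have "Re (?L + of_real ?t * cnj ?Z * ?W) = 0"
    using arg_cong[OF minimal, of Re] \<open>?L \<in> \<real>\<close>
      dxib_cx[OF \<open>w differentiable (at p)\<close>] dxib_cx[OF assms(4)]
    by (simp add: complex_is_Real_iff algebra_simps)
  ultimately have "dxib F p \<in> \<real>"
    using \<open>Re c = 0\<close> by (simp add: complex_is_Real_iff)
  then show ?thesis
    using dxib_eq_dxi_cnj_iff differentiable_weighted_dxi_cx[OF assms(1-4) exp_\<phi>]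
    unfolding F_def by blast
qed

lemma dxib_eq_dxi_cnj_vertical:
  fixes z :: "complex \<Rightarrow> real"
  assumes "open U" "p \<in> U" "Ck_on 2 U z" "\<phi> differentiable (at (z p))"
  defines "F \<equiv> \<lambda>q. complex_of_real (exp (\<phi> (z q))) * dxi (cx z) q"
  shows "dxib F p = dxi (\<lambda>q. cnj (F q)) p"
proof -
  let ?L = "dxib (dxi (cx z)) p" and ?Z = "dxi (cx z) p"
    and ?t = "deriv \<phi> (z p)" and ?E = "exp (\<phi> (z p))"
  note exp_\<phi> = has_real_derivative_exp_comp[OF assms(4)]
  have "z differentiable (at p)"
    using Ck_on_2_differentiable_at[OF assms(1-3)] .
  note weighted = dxib_weighted_dxi_cx[where c=1, OF assms(1-3) this exp_\<phi>]
    differentiable_weighted_dxi_cx[where c=1, OF assms(1-3) this exp_\<phi>]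
  have "dxib F p = of_real ?E * (?L + of_real ?t * (cnj ?Z * ?Z))"
    using weighted dxib_cx[OF \<open>z differentiable (at p)\<close>]
    by (simp add: F_def algebra_simps)
  moreover have "?L \<in> \<real>"
    unfolding dxib_dxi_cx[OF assms(1-3)] by (rule Reals_of_real)
  ultimately have "dxib F p \<in> \<real>"
    by (simp add: complex_is_Real_iff)
  moreover have "F differentiable (at p)"
    using weighted(2) by (simp add: F_def)
  ultimately show ?thesis
    using dxib_eq_dxi_cnj_iff by blast
qed

theorem proposition1:
  fixes \<phi> :: "real \<Rightarrow> real" and I :: "real set" and U :: "complex set"
    and x y z :: "complex \<Rightarrow> real"
  assumes "open I" and "is_interval I" and "smooth1_on I \<phi>"
    and "phi_minimal \<phi> I U x y z"
  defines "F1 \<equiv> (\<lambda>q. - \<i> * complex_of_real (exp (\<phi> (z q))) * dxi (cx y) q)"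
    and "F2 \<equiv> (\<lambda>q. \<i> * complex_of_real (exp (\<phi> (z q))) * dxi (cx x) q)"
    and "F3 \<equiv> (\<lambda>q. complex_of_real (exp (\<phi> (z q))) * dxi (cx z) q)"
  shows "\<forall>p\<in>U. dxib F1 p = dxi (\<lambda>q. cnj (F1 q)) p
              \<and> dxib F2 p = dxi (\<lambda>q. cnj (F2 q)) p
              \<and> dxib F3 p = dxi (\<lambda>q. cnj (F3 q)) p"
proof (intro ballI conjI)
  fix p assume "p \<in> U"
  have U: "open U" and C2: "Ck_on 2 U x" "Ck_on 2 U y" "Ck_on 2 U z" and "z p \<in> I"
    using assms(4) \<open>p \<in> U\<close>
    by (auto simp: phi_minimal_def conformal_immersion_def smooth2_on_def)
  have \<phi>: "\<phi> differentiable (at (z p))"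
    using assms(1,3) \<open>z p \<in> I\<close> differentiable_on_eq_differentiable_at
    unfolding smooth1_on_def by (metis funpow_0)
  have z: "z differentiable (at p)"
    using Ck_on_2_differentiable_at[OF U \<open>p \<in> U\<close> C2(3)] .
  note minimal = assms(4)[unfolded phi_minimal_def, THEN conjunct2, THEN conjunct2,
      rule_format, OF \<open>p \<in> U\<close>]
  note minimal_x = minimal[THEN conjunct1] and minimal_y = minimal[THEN conjunct2, THEN conjunct1]
  show "dxib F1 p = dxi (\<lambda>q. cnj (F1 q)) p"
    unfolding F1_def
    by (rule dxib_eq_dxi_cnj_horizontal[OF U \<open>p \<in> U\<close> C2(2) z \<phi> _ minimal_y]) simp
  show "dxib F2 p = dxi (\<lambda>q. cnj (F2 q)) p"
    unfolding F2_def
    by (rule dxib_eq_dxi_cnj_horizontal[OF U \<open>p \<in> U\<close> C2(1) z \<phi> _ minimal_x]) simp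
  show "dxib F3 p = dxi (\<lambda>q. cnj (F3 q)) p"
    unfolding F3_def by (rule dxib_eq_dxi_cnj_vertical[OF U \<open>p \<in> U\<close> C2(3) \<phi>])
qed

end
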